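(* Let $A\in\mathbb{T}^{m\times n}$, $B\in\mathbb{T}^{m\times q}$ and let $P\in\mathbb{R}^{q\times n}$ be a row-stochastic matrix (nonnegative entries, each row summing to $1$). Assume every row of $B$ has at least one finite entry, every column of $A$ has at least one finite entry, and every row of $A$ has at least one finite entry. Let $F=A^\sharp\circ B\circ P$ (a self-map of $\mathbb{T}^n$) and $F^\ast=(B^\top)^\sharp\circ P\circ A^\top$ (a self-map of $\mathbb{T}^m$), i.e. $F(x)=A^\sharp(B\odot(Px))$ and $F^\ast(y)=(B^\top)^\sharp(P(A^\top\odot y))$. Then \[ \overline{\mathrm{cw}}(F^\ast) = -\,\underline{\mathrm{cw}}(F). \]
   Context: $\mathbb{T}=\mathbb{R}\cup\{-\infty\}$ with tropical operations $a\oplus b=\max(a,b)$, $a\odot b=a+b$. For a matrix $C\in\mathbb{T}^{r\times s}$ and $z\in\mathbb{T}^s$, $(C\odot z)_i=\max_k (C_{ik}+z_k)$. For $C\in\mathbb{T}^{r\times s}$, the adjoint $C^\sharp$ maps $y\in(\mathbb{R}\cup\{\pm\infty\})^r$ to the vector with entries $C^\sharp(y)_j=\min_i(-C_{ij}+y_i)$, with the convention $(+\infty)+(-\infty)=(-\infty)+(+\infty)=+\infty$. $C^\top$ is the transpose. For a real matrix $P$ and $z\in\mathbb{T}^s$, $Pz$ is the usual matrix–vector product with the convention $0\cdot(-\infty)=0$. $\mathbb{T}^n$ is ordered entrywise; for $\lambda\in\mathbb{R}$, $\lambda+z$ is entrywise addition. For a self-map $G$ of $\mathbb{T}^d$: $\overline{\mathrm{cw}}(G)=\inf\{\mu\in\mathbb{R}: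 \exists z\in\mathbb{R}^d,\ G(z)\le\mu+z\}$ and $\underline{\mathrm{cw}}(G)=\sup\{\mu\in\mathbb{R}: \exists z\in\mathbb{R}^d,\ G(z)\ge\mu+z\}$. *)

theory Defs
  imports Complex_Main "HOL-Library.Extended_Real"
begin

(* Tropical semiring T = R \<union> {-\<infinity>} is modelled inside ereal (values \<noteq> \<infinity>). Note: in ereal,
   \<infinity> + -\<infinity> = -\<infinity> + \<infinity> = \<infinity>, matching the adjoint convention,
   and 0 * -\<infinity> = 0, matching the convention for P z. *)

definition trop_mv :: "('r \<Rightarrow> 's::finite \<Rightarrow> ereal) \<Rightarrow> ('s \<Rightarrow> ereal) \<Rightarrow> ('r \<Rightarrow> ereal)" where
  "trop_mv C z = (\<lambda>i. Max (range (\<lambda>k. C i k + z k)))"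

definition trop_adj :: "('r::finite \<Rightarrow> 's \<Rightarrow> ereal) \<Rightarrow> ('r \<Rightarrow> ereal) \<Rightarrow> ('s \<Rightarrow> ereal)" where
  "trop_adj C y = (\<lambda>j. Min (range (\<lambda>i. - C i j + y i)))"

definition mtrans :: "('r \<Rightarrow> 's \<Rightarrow> 'a) \<Rightarrow> ('s \<Rightarrow> 'r \<Rightarrow> 'a)" where
  "mtrans C = (\<lambda>j i. C i j)"

definition real_mv :: "('r \<Rightarrow> 's::finite \<Rightarrow> real) \<Rightarrow> ('s \<Rightarrow> ereal) \<Rightarrow> ('r \<Rightarrow> ereal)" where
  "real_mv P z = (\<lambda>i. \<Sum>k\<in>UNIV. ereal (P i k) * z k)"

definition row_stochastic :: "('r \<Rightarrow> 's::finite \<Rightarrow> real) \<Rightarrow> bool" where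
  "row_stochastic P \<longleftrightarrow> (\<forall>i k. 0 \<le> P i k) \<and> (\<forall>i. (\<Sum>k\<in>UNIV. P i k) = 1)"

definition tropical_mat :: "('r \<Rightarrow> 's \<Rightarrow> ereal) \<Rightarrow> bool" where
  "tropical_mat C \<longleftrightarrow> (\<forall>i j. C i j \<noteq> \<infinity>)"

(* upper / lower cycle-time bounds, valued in extended reals (inf \<emptyset> = +\<infinity>, sup \<emptyset> = -\<infinity>) *)
definition cw_upper :: "(('d \<Rightarrow> ereal) \<Rightarrow> ('d \<Rightarrow> ereal)) \<Rightarrow> ereal" where
  "cw_upper G = Inf (ereal ` {\<mu>::real. \<exists>z::'d \<Rightarrow> real.
       \<forall>i. G (\<lambda>j. ereal (z j)) i \<le> ereal (\<mu> + z i)})"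

definition cw_lower :: "(('d \<Rightarrow> ereal) \<Rightarrow> ('d \<Rightarrow> ereal)) \<Rightarrow> ereal" where
  "cw_lower G = Sup (ereal ` {\<mu>::real. \<exists>z::'d \<Rightarrow> real.
       \<forall>i. G (\<lambda>j. ereal (z j)) i \<ge> ereal (\<mu> + z i)})"

end

theory Submission
  imports Defs
begin

text \<open>For real vectors, residuation \<open>A \<odot> x \<le> y \<longleftrightarrow> x \<le> A\<^sup>\<sharp> y\<close> shows that
  \<open>A\<^sup>\<sharp> \<circ> H\<close> and \<open>H \<circ> A\<^sup>\<sharp>\<close> have the same super-eigenvalues whenever
  \<open>H = B \<odot> P(\<cdot>)\<close> is monotone: a super-eigenvector \<open>x\<close> of the first gives \<open>A \<odot> x\<close>
  for the second, and \<open>w\<close> gives back \<open>A\<^sup>\<sharp> w\<close>. On the other hand, on real vectors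
  \<open>C\<^sup>\<sharp> y = -(C\<^sup>\<top> \<odot> (-y))\<close>, so \<open>F\<^sup>*(y) = -(H (A\<^sup>\<sharp> (-y)))\<close>, which turns the
  sub-eigenvalues of \<open>F\<^sup>*\<close> into the negated super-eigenvalues of \<open>H \<circ> A\<^sup>\<sharp>\<close>.
  The finiteness conditions on \<open>A\<close> keep all vectors involved real.\<close>

lemma uminus_Max_range_ereal:
  fixes f :: "'a::finite \<Rightarrow> ereal"
  shows "- Max (range f) = Min (range (\<lambda>i. - f i))"
proof (rule antisym)
  show "- Max (range f) \<le> Min (range (\<lambda>i. - f i))"
    by (simp add: Min_ge_iff ereal_uminus_le_reorder)
  have "Max (range f) \<in> range f"
    by (rule Max_in) auto
  then obtain i where "Max (range f) = f i"
    by blast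
  then show "Min (range (\<lambda>i. - f i)) \<le> - Max (range f)"
    by (simp add: Min_le_iff)
qed

lemma ereal_add_le_iff_le_uminus_add:
  fixes c y :: ereal
  shows "c + ereal r \<le> y \<longleftrightarrow> ereal r \<le> - c + y"
  by (cases c; cases y) auto

lemma mtrans_mtrans [simp]: "mtrans (mtrans C) = C"
  by (simp add: mtrans_def)

lemma real_mv_real:
  "real_mv P (\<lambda>k. ereal (z k)) = (\<lambda>i. ereal (\<Sum>k\<in>UNIV. P i k * z k))"
  unfolding real_mv_def by simp

lemma real_mv_mono:
  assumes "\<And>i k. 0 \<le> P i k" and "\<And>k. x k \<le> y k"
  shows "real_mv P (\<lambda>k. ereal (x k)) i \<le> real_mv P (\<lambda>k. ereal (y k)) i"
  unfolding real_mv_real using assms by (simp add: sum_mono mult_left_mono)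

lemma trop_mv_mono:
  assumes "\<And>k. x k \<le> y k"
  shows "trop_mv C x i \<le> trop_mv C y i"
proof -
  have "C i k + x k \<le> Max (range (\<lambda>k. C i k + y k))" for k
    using add_left_mono[OF assms] by (simp add: Max_ge_iff) blast
  then show ?thesis
    unfolding trop_mv_def by (simp add: Max_le_iff)
qed

lemma trop_mv_add_const:
  "trop_mv C (\<lambda>k. ereal (c + x k)) i = ereal c + trop_mv C (\<lambda>k. ereal (x k)) i"
proof -
  have shift: "C i k + ereal (c + x k) = ereal c + (C i k + ereal (x k))" for k
    by (cases "C i k") auto
  have "mono ((+) (ereal c))"
    by (rule monoI) (rule add_left_mono)
  then have "ereal c + Max (range (\<lambda>k. C i k + ereal (x k)))
      = Max ((+) (ereal c) ` range (\<lambda>k. C i k + ereal (x k)))"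
    by (rule mono_Max_commute) auto
  then show ?thesis
    unfolding trop_mv_def image_image shift by simp
qed

lemma trop_mv_real:
  fixes C :: "'r \<Rightarrow> 's::finite \<Rightarrow> ereal"
  assumes "tropical_mat C" and "\<forall>i. \<exists>k. C i k \<noteq> -\<infinity>"
  obtains t where "trop_mv C (\<lambda>k. ereal (z k)) = (\<lambda>i. ereal (t i))"
proof
  show "trop_mv C (\<lambda>k. ereal (z k)) = (\<lambda>i. ereal (real_of_ereal (trop_mv C (\<lambda>k. ereal (z k)) i)))"
  proof
    fix i
    let ?S = "range (\<lambda>k. C i k + ereal (z k))"
    have "Max ?S \<in> ?S"
      by (rule Max_in) auto
    then obtain k where "Max ?S = C i k + ereal (z k)"
      by blast
    then have not_PInf: "Max ?S \<noteq> \<infinity>"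
      using assms(1) unfolding tropical_mat_def by auto
    obtain k' where k': "C i k' \<noteq> -\<infinity>"
      using assms(2) by blast
    have "C i k' + ereal (z k') \<le> Max ?S"
      by (rule Max_ge) auto
    then have "Max ?S \<noteq> -\<infinity>"
      using k' by (cases "C i k'") auto
    with not_PInf show "trop_mv C (\<lambda>k. ereal (z k)) i = ereal (real_of_ereal (trop_mv C (\<lambda>k. ereal (z k)) i))"
      unfolding trop_mv_def by (cases "Max ?S") auto
  qed
qed

text \<open>Residuation needs \<open>x\<close> real: with \<open>\<infinity> + -\<infinity> = \<infinity>\<close> it fails for \<open>x k = \<infinity>\<close>
  and an entry \<open>C i k = -\<infinity>\<close>.\<close>

lemma trop_mv_le_iff_le_trop_adj:
  "(\<forall>i. trop_mv C (\<lambda>k. ereal (x k)) i \<le> y i) \<longleftrightarrow> (\<forall>k. ereal (x k) \<le> trop_adj C y k)"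
  unfolding trop_mv_def trop_adj_def
  by (auto simp: Max_le_iff Min_ge_iff ereal_add_le_iff_le_uminus_add)

lemma trop_adj_eq_uminus_trop_mv_mtrans:
  "trop_adj C (\<lambda>i. ereal (y i)) = (\<lambda>j. - trop_mv (mtrans C) (\<lambda>i. ereal (- y i)) j)"
proof
  fix j
  have "- (C i j + ereal (- y i)) = - C i j + ereal (y i)" for i
    by (cases "C i j") auto
  then show "trop_adj C (\<lambda>i. ereal (y i)) j = - trop_mv (mtrans C) (\<lambda>i. ereal (- y i)) j"
    unfolding trop_adj_def trop_mv_def mtrans_def uminus_Max_range_ereal by simp
qed

lemma trop_adj_real:
  fixes C :: "'r::finite \<Rightarrow> 's \<Rightarrow> ereal"
  assumes "tropical_mat C" and "\<forall>j. \<exists>i. C i j \<noteq> -\<infinity>"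
  obtains x where "trop_adj C (\<lambda>i. ereal (w i)) = (\<lambda>j. ereal (x j))"
proof -
  have "tropical_mat (mtrans C)" and "\<forall>j. \<exists>i. mtrans C j i \<noteq> -\<infinity>"
    using assms by (auto simp: tropical_mat_def mtrans_def)
  then obtain t where "trop_mv (mtrans C) (\<lambda>i. ereal (- w i)) = (\<lambda>j. ereal (t j))"
    by (rule trop_mv_real)
  then have "trop_adj C (\<lambda>i. ereal (w i)) = (\<lambda>j. ereal (- t j))"
    by (simp add: trop_adj_eq_uminus_trop_mv_mtrans)
  then show thesis by (rule that)
qed

definition sub_eigenvalues :: "(('d \<Rightarrow> ereal) \<Rightarrow> ('d \<Rightarrow> ereal)) \<Rightarrow> real set" where
  "sub_eigenvalues G = {\<mu>. \<exists>z. \<forall>i. G (\<lambda>j. ereal (z j)) i \<le> ereal (\<mu> + z i)}"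

definition super_eigenvalues :: "(('d \<Rightarrow> ereal) \<Rightarrow> ('d \<Rightarrow> ereal)) \<Rightarrow> real set" where
  "super_eigenvalues G = {\<mu>. \<exists>z. \<forall>i. ereal (\<mu> + z i) \<le> G (\<lambda>j. ereal (z j)) i}"

lemma cw_upper_eq_Inf_sub_eigenvalues: "cw_upper G = Inf (ereal ` sub_eigenvalues G)"
  by (simp add: cw_upper_def sub_eigenvalues_def)

lemma cw_lower_eq_Sup_super_eigenvalues: "cw_lower G = Sup (ereal ` super_eigenvalues G)"
  by (simp add: cw_lower_def super_eigenvalues_def)

lemma sub_eigenvalues_uminus_conj:
  assumes "\<And>y. G (\<lambda>i. ereal (y i)) = (\<lambda>i. - K (\<lambda>j. ereal (- y j)) i)"
  shows "sub_eigenvalues G = uminus ` super_eigenvalues K"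
proof -
  have eigen_iff: "G (\<lambda>j. ereal (y j)) i \<le> ereal (\<mu> + y i)
      \<longleftrightarrow> ereal (- \<mu> + - y i) \<le> K (\<lambda>j. ereal (- y j)) i" for \<mu> y i
    by (simp add: assms ereal_uminus_le_reorder)
  have "\<mu> \<in> sub_eigenvalues G \<longleftrightarrow> - \<mu> \<in> super_eigenvalues K" for \<mu>
  proof
    assume "\<mu> \<in> sub_eigenvalues G"
    then obtain y where "\<forall>i. ereal (- \<mu> + - y i) \<le> K (\<lambda>j. ereal (- y j)) i"
      unfolding sub_eigenvalues_def eigen_iff by blast
    then show "- \<mu> \<in> super_eigenvalues K"
      unfolding super_eigenvalues_def mem_Collect_eq by (intro exI[of _ "\<lambda>j. - y j"]) simp
  next
    assume "- \<mu> \<in> super_eigenvalues K"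
    then obtain z where "\<forall>i. ereal (- \<mu> + z i) \<le> K (\<lambda>j. ereal (z j)) i"
      unfolding super_eigenvalues_def by blast
    then have "\<forall>i. G (\<lambda>j. ereal (- z j)) i \<le> ereal (\<mu> + - z i)"
      using eigen_iff[of "\<lambda>j. - z j"] by simp
    then show "\<mu> \<in> sub_eigenvalues G"
      unfolding sub_eigenvalues_def mem_Collect_eq by (intro exI[of _ "\<lambda>j. - z j"]) simp
  qed
  moreover have "\<mu> \<in> uminus ` super_eigenvalues K \<longleftrightarrow> - \<mu> \<in> super_eigenvalues K" for \<mu>
    using inj_image_mem_iff[of uminus "- \<mu>"] by simp
  ultimately show ?thesis
    by blast
qed

lemma super_eigenvalues_residuated_swap:
  fixes A :: "'m::finite \<Rightarrow> 'n::finite \<Rightarrow> ereal" and H :: "('n \<Rightarrow> ereal) \<Rightarrow> ('m \<Rightarrow> ereal)"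
  assumes A: "tropical_mat A" and rows: "\<forall>i. \<exists>j. A i j \<noteq> -\<infinity>" and cols: "\<forall>j. \<exists>i. A i j \<noteq> -\<infinity>"
    and H_mono: "\<And>x y i. (\<And>j. x j \<le> y j) \<Longrightarrow> H (\<lambda>j. ereal (x j)) i \<le> H (\<lambda>j. ereal (y j)) i"
  shows "super_eigenvalues (\<lambda>x. trop_adj A (H x)) = super_eigenvalues (\<lambda>w. H (trop_adj A w))"
proof (intro set_eqI iffI)
  fix \<mu> assume "\<mu> \<in> super_eigenvalues (\<lambda>x. trop_adj A (H x))"
  then obtain x where x: "\<And>j. ereal (\<mu> + x j) \<le> trop_adj A (H (\<lambda>j. ereal (x j))) j"
    unfolding super_eigenvalues_def by blast
  obtain w where w: "trop_mv A (\<lambda>j. ereal (x j)) = (\<lambda>i. ereal (w i))"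
    using trop_mv_real[OF A rows] by blast
  obtain x' where x': "trop_adj A (\<lambda>i. ereal (w i)) = (\<lambda>j. ereal (x' j))"
    using trop_adj_real[OF A cols] by blast
  have x_le: "x j \<le> x' j" for j
    using trop_mv_le_iff_le_trop_adj[of A x "\<lambda>i. ereal (w i)"] w x' by simp
  have "ereal (\<mu> + w i) \<le> H (\<lambda>j. ereal (x j)) i" for i
    using trop_mv_le_iff_le_trop_adj[of A "\<lambda>j. \<mu> + x j" "H (\<lambda>j. ereal (x j))"] x
    by (simp add: trop_mv_add_const w)
  also have "\<dots> i \<le> H (\<lambda>j. ereal (x' j)) i" for i
    using H_mono x_le by blast
  finally show "\<mu> \<in> super_eigenvalues (\<lambda>w. H (trop_adj A w))"
    unfolding super_eigenvalues_def x'[symmetric] by blast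
next
  fix \<mu> assume "\<mu> \<in> super_eigenvalues (\<lambda>w. H (trop_adj A w))"
  then obtain w where w: "\<And>i. ereal (\<mu> + w i) \<le> H (trop_adj A (\<lambda>i. ereal (w i))) i"
    unfolding super_eigenvalues_def by blast
  obtain x where x: "trop_adj A (\<lambda>i. ereal (w i)) = (\<lambda>j. ereal (x j))"
    using trop_adj_real[OF A cols] by blast
  have "trop_mv A (\<lambda>j. ereal (x j)) i \<le> ereal (w i)" for i
    using trop_mv_le_iff_le_trop_adj[of A x "\<lambda>i. ereal (w i)"] x by simp
  then have "trop_mv A (\<lambda>j. ereal (\<mu> + x j)) i \<le> H (\<lambda>j. ereal (x j)) i" for i
    using w[of i] unfolding trop_mv_add_const x
    by (metis add_left_mono order_trans plus_ereal.simps(1))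
  then have "ereal (\<mu> + x j) \<le> trop_adj A (H (\<lambda>j. ereal (x j))) j" for j
    using trop_mv_le_iff_le_trop_adj[of A "\<lambda>j. \<mu> + x j" "H (\<lambda>j. ereal (x j))"] by blast
  then show "\<mu> \<in> super_eigenvalues (\<lambda>x. trop_adj A (H x))"
    unfolding super_eigenvalues_def by blast
qed

lemma trop_dual_map_eq_uminus_conj:
  fixes A :: "'m::finite \<Rightarrow> 'n::finite \<Rightarrow> ereal" and B :: "'m \<Rightarrow> 'q::finite \<Rightarrow> ereal"
    and P :: "'q \<Rightarrow> 'n \<Rightarrow> real"
  assumes "tropical_mat A" and "\<forall>j. \<exists>i. A i j \<noteq> -\<infinity>"
  shows "trop_adj (mtrans B) (real_mv P (trop_mv (mtrans A) (\<lambda>i. ereal (y i))))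
       = (\<lambda>i. - trop_mv B (real_mv P (trop_adj A (\<lambda>i. ereal (- y i)))) i)"
proof -
  obtain x where x: "trop_adj A (\<lambda>i. ereal (- y i)) = (\<lambda>j. ereal (x j))"
    using trop_adj_real[OF assms, of "\<lambda>i. - y i"] by blast
  have neg: "ereal (x j) = - trop_mv (mtrans A) (\<lambda>i. ereal (y i)) j" for j
    using trop_adj_eq_uminus_trop_mv_mtrans[of A "\<lambda>i. - y i"] unfolding x by (simp add: fun_eq_iff)
  have "trop_mv (mtrans A) (\<lambda>i. ereal (y i)) = (\<lambda>j. ereal (- x j))"
  proof
    fix j
    have "trop_mv (mtrans A) (\<lambda>i. ereal (y i)) j = - ereal (x j)"
      unfolding neg by simp
    then show "trop_mv (mtrans A) (\<lambda>i. ereal (y i)) j = ereal (- x j)"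
      by simp
  qed
  then have "real_mv P (trop_mv (mtrans A) (\<lambda>i. ereal (y i)))
      = (\<lambda>k. ereal (- (\<Sum>j\<in>UNIV. P k j * x j)))"
    by (simp add: real_mv_real sum_negf)
  then show ?thesis
    unfolding x by (simp add: real_mv_real trop_adj_eq_uminus_trop_mv_mtrans)
qed

theorem mainTheorem2:
  fixes A :: "'m::finite \<Rightarrow> 'n::finite \<Rightarrow> ereal"
    and B :: "'m \<Rightarrow> 'q::finite \<Rightarrow> ereal"
    and P :: "'q \<Rightarrow> 'n \<Rightarrow> real"
  assumes "tropical_mat A" and "tropical_mat B"
    and "row_stochastic P"
    and "\<forall>i. \<exists>k. B i k \<noteq> -\<infinity>"
    and "\<forall>j. \<exists>i. A i j \<noteq> -\<infinity>"
    and "\<forall>i. \<exists>j. A i j \<noteq> -\<infinity>"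
  shows "cw_upper (\<lambda>y. trop_adj (mtrans B) (real_mv P (trop_mv (mtrans A) y)))
         = - cw_lower (\<lambda>x. trop_adj A (trop_mv B (real_mv P x)))"
proof -
  let ?H = "\<lambda>x. trop_mv B (real_mv P x)"
  have "\<And>k j. 0 \<le> P k j"
    using assms(3) unfolding row_stochastic_def by blast
  then have "super_eigenvalues (\<lambda>x. trop_adj A (?H x)) = super_eigenvalues (\<lambda>w. ?H (trop_adj A w))"
    using assms(1,5,6) by (intro super_eigenvalues_residuated_swap trop_mv_mono real_mv_mono)
  moreover have "sub_eigenvalues (\<lambda>y. trop_adj (mtrans B) (real_mv P (trop_mv (mtrans A) y)))
      = uminus ` super_eigenvalues (\<lambda>w. ?H (trop_adj A w))"
    using assms(1,5) by (intro sub_eigenvalues_uminus_conj trop_dual_map_eq_uminus_conj)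
  ultimately show ?thesis
    unfolding cw_upper_eq_Inf_sub_eigenvalues cw_lower_eq_Sup_super_eigenvalues
    by (simp add: image_image ereal_Inf_uminus_image_eq[symmetric])
qed

end
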